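(* Let $\mathbb{H}$ be a reproducing kernel Hilbert space with inner product $\langle\cdot,\cdot\rangle$ and feature map $\phi$, and let $(X,A,Y)$ be jointly distributed with $Y=\langle\phi(X),y\rangle$ and $A=\langle\phi(X),a\rangle$ for some nonzero $y,a\in\mathbb{H}$, with $\operatorname{Var}(Y),\operatorname{Var}(A)>0$. Let $\Sigma:=\operatorname{Cov}(\phi(X),\phi(X))$ be the covariance operator. Then for every (possibly randomized) representation $Z=g(X)$ with $\operatorname{Var}\mathbb{E}[Y\mid Z]=\operatorname{Var}(Y)$, $$\operatorname{Var}\mathbb{E}[A\mid Z]\ge \frac{\langle a,\Sigma y\rangle^2}{\langle y,\Sigma y\rangle}=\operatorname{Var}(A)\cdot\rho_{YA}^2,$$ where $\rho_{YA}$ is the correlation coefficient of $Y$ and $A$.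
   Context: A (possibly randomized) representation is $Z=g(X,S)$ for a measurable $g$ and auxiliary randomness $S$ independent of $(X,A,Y)$. $\phi(X)$ is assumed to have finite second moment in $\mathbb{H}$. *)

theory Defs
  imports "HOL-Probability.Probability"
begin

definition rv_cov :: "'o measure \<Rightarrow> ('o \<Rightarrow> real) \<Rightarrow> ('o \<Rightarrow> real) \<Rightarrow> real" where
  "rv_cov M U V = (\<integral>\<omega>. (U \<omega> - (\<integral>\<omega>'. U \<omega>' \<partial>M)) * (V \<omega> - (\<integral>\<omega>'. V \<omega>' \<partial>M)) \<partial>M)"

definition rv_var :: "'o measure \<Rightarrow> ('o \<Rightarrow> real) \<Rightarrow> real" where
  "rv_var M U = (\<integral>\<omega>. (U \<omega> - (\<integral>\<omega>'. U \<omega>' \<partial>M))\<^sup>2 \<partial>M)"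

definition rv_corr :: "'o measure \<Rightarrow> ('o \<Rightarrow> real) \<Rightarrow> ('o \<Rightarrow> real) \<Rightarrow> real" where
  "rv_corr M U V = rv_cov M U V / sqrt (rv_var M U * rv_var M V)"

definition cov_op :: "'o measure \<Rightarrow> ('o \<Rightarrow> 'h::real_inner) \<Rightarrow> ('h \<Rightarrow> 'h)" where
  "cov_op M Phi = (THE T. \<forall>u v. u \<bullet> T v = rv_cov M (\<lambda>\<omega>. Phi \<omega> \<bullet> u) (\<lambda>\<omega>. Phi \<omega> \<bullet> v))"

definition cond_exp_given :: "'o measure \<Rightarrow> ('o \<Rightarrow> 'z) \<Rightarrow> 'z measure \<Rightarrow> ('o \<Rightarrow> real) \<Rightarrow> ('o \<Rightarrow> real)" where
  "cond_exp_given M Z MZ f = real_cond_exp M (vimage_algebra (space M) Z MZ) f"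

end

theory Submission
  imports Defs
begin

(* If Var E[Y|Z] = Var Y, the law of total variance forces E[Y|Z] = Y almost surely. The projection
   property then gives Cov(E[A|Z], E[Y|Z]) = Cov(A, E[Y|Z]) = Cov(A, Y), and Cauchy-Schwarz for
   covariances yields Cov(A, Y)^2 <= Var E[A|Z] * Var Y. The covariance operator exists by the Riesz
   representation theorem, with a . Sigma y = Cov(A, Y) and y . Sigma y = Var Y. *)

section \<open>Minimal-norm points and the Riesz representation\<close>

lemma quadratic_nonneg_imp_discriminant_nonpos:
  fixes a b c :: real
  assumes "0 \<le> a" and nonneg: "\<And>t. 0 \<le> a * t\<^sup>2 + b * t + c"
  shows "b\<^sup>2 \<le> 4 * a * c"
proof (cases "a = 0")
  case True
  have "b = 0"
  proof (rule ccontr)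
    assume "b \<noteq> 0"
    then show False
      using nonneg[of "- (c + 1) / b"] True by simp
  qed
  with True show ?thesis by simp
next
  case False
  with \<open>0 \<le> a\<close> have "0 < a" by simp
  have "0 \<le> a * (- b / (2 * a))\<^sup>2 + b * (- b / (2 * a)) + c"
    by (rule nonneg)
  also have "\<dots> = (4 * a * c - b\<^sup>2) / (4 * a)"
    using \<open>0 < a\<close> by (simp add: field_simps power2_eq_square)
  finally show ?thesis
    using \<open>0 < a\<close> by (simp add: zero_le_divide_iff)
qed

lemma inner_eq_0_if_norm_le_norm_add_scaleR:
  fixes w k :: "'a::real_inner"
  assumes "\<And>t. norm w \<le> norm (w + t *\<^sub>R k)"
  shows "w \<bullet> k = 0"
proof -
  have "0 \<le> (k \<bullet> k) * t\<^sup>2 + (2 * (w \<bullet> k)) * t + 0" for t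
  proof -
    have "(norm w)\<^sup>2 \<le> (norm (w + t *\<^sub>R k))\<^sup>2"
      using assms[of t] by (simp add: power_mono)
    also have "\<dots> = (norm w)\<^sup>2 + 2 * t * (w \<bullet> k) + t\<^sup>2 * (k \<bullet> k)"
      unfolding power2_norm_eq_inner
      by (simp add: inner_commute algebra_simps power2_eq_square)
    finally show ?thesis
      by (simp add: algebra_simps)
  qed
  from quadratic_nonneg_imp_discriminant_nonpos[OF _ this] show ?thesis
    by simp
qed

lemma min_norm_point_exists:
  fixes S :: "'a::{real_inner, complete_space} set"
  assumes "closed S" and "convex S" and "S \<noteq> {}"
  obtains w where "w \<in> S" and "\<And>s. s \<in> S \<Longrightarrow> norm w \<le> norm s"
proof -
  define d where "d = Inf ((\<lambda>s. (norm s)\<^sup>2) ` S)"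
  have d_le: "d \<le> (norm s)\<^sup>2" if "s \<in> S" for s
    unfolding d_def by (rule cInf_lower) (use that in \<open>auto intro: bdd_belowI[of _ 0]\<close>)
  have "\<exists>s\<in>S. (norm s)\<^sup>2 < d + inverse (real (Suc n))" for n
    using cInf_lessD[of "(\<lambda>s. (norm s)\<^sup>2) ` S" "d + inverse (real (Suc n))"] \<open>S \<noteq> {}\<close>
    by (auto simp: d_def)
  then obtain w where w_in: "\<And>n. w n \<in> S"
    and w_norm: "\<And>n. (norm (w n))\<^sup>2 < d + inverse (real (Suc n))"
    by metis
  \<comment> \<open>By the parallelogram law, the midpoint of two almost minimal points forces them close.\<close>
  have w_close:
    "(norm (w m - w n))\<^sup>2 \<le> 2 * inverse (real (Suc m)) + 2 * inverse (real (Suc n))" for m n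
  proof -
    have "(w m + w n) /\<^sub>R 2 \<in> S"
      using \<open>convex S\<close> w_in[of m] w_in[of n]
      by (auto simp: convex_def scaleR_add_right intro!: convexD[of S, where u="1/2" and v="1/2"])
    then have "4 * d \<le> (norm (w m + w n))\<^sup>2"
      using d_le by (fastforce simp: power2_eq_square)
    moreover have "(norm (w m - w n))\<^sup>2
        = 2 * (norm (w m))\<^sup>2 + 2 * (norm (w n))\<^sup>2 - (norm (w m + w n))\<^sup>2"
      by (simp add: power2_norm_eq_inner inner_commute algebra_simps)
    ultimately show ?thesis
      using w_norm[of m] w_norm[of n] by linarith
  qed
  have "Cauchy w"
  proof (rule metric_CauchyI)
    fix r :: real
    assume "0 < r"
    then obtain N where N: "inverse (real (Suc N)) < r\<^sup>2 / 4"
      using reals_Archimedean[of "r\<^sup>2 / 4"] by auto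
    have "dist (w m) (w n) < r" if "N \<le> m" "N \<le> n" for m n
    proof -
      have "inverse (real (Suc m)) \<le> inverse (real (Suc N))"
        and "inverse (real (Suc n)) \<le> inverse (real (Suc N))"
        using that by (simp_all add: le_imp_inverse_le)
      then have "(norm (w m - w n))\<^sup>2 < r\<^sup>2"
        using w_close[of m n] N by linarith
      then show ?thesis
        using \<open>0 < r\<close> by (simp add: dist_norm power_less_imp_less_base)
    qed
    then show "\<exists>N. \<forall>m\<ge>N. \<forall>n\<ge>N. dist (w m) (w n) < r"
      by blast
  qed
  then obtain w0 where lim: "w \<longlonglongrightarrow> w0"
    using Cauchy_convergent convergent_def by blast
  have "w0 \<in> S"
    using \<open>closed S\<close> w_in lim by (rule closed_sequentially)
  moreover have "(norm w0)\<^sup>2 \<le> d"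
  proof (rule LIMSEQ_le)
    show "(\<lambda>n. (norm (w n))\<^sup>2) \<longlonglongrightarrow> (norm w0)\<^sup>2"
      using lim by (intro tendsto_intros)
    show "(\<lambda>n. d + inverse (real (Suc n))) \<longlonglongrightarrow> d"
      using tendsto_add[OF tendsto_const[of d] LIMSEQ_inverse_real_of_nat] by simp
    show "\<exists>N. \<forall>n\<ge>N. (norm (w n))\<^sup>2 \<le> d + inverse (real (Suc n))"
      using w_norm less_imp_le by blast
  qed
  ultimately show ?thesis
    using d_le by (metis that order_trans norm_ge_zero power2_le_imp_le)
qed

theorem riesz_representation:
  fixes f :: "'a::{real_inner, complete_space} \<Rightarrow> real"
  assumes "bounded_linear f"
  obtains w where "\<And>u. f u = u \<bullet> w"
proof (cases "\<forall>u. f u = 0")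
  case True
  then show ?thesis
    using that[of 0] by simp
next
  case False
  interpret f: bounded_linear f by (rule assms)
  obtain u0 where "f u0 \<noteq> 0"
    using False by blast
  have "closed (f -` {1})"
    using assms by (intro continuous_closed_vimage) (auto intro: linear_continuous_at)
  moreover have "convex (f -` {1})"
    by (simp add: convex_def f.add f.scale)
  moreover have "f -` {1} \<noteq> {}"
  proof -
    have "f (u0 /\<^sub>R f u0) = 1"
      using \<open>f u0 \<noteq> 0\<close> by (simp add: f.scale)
    then show ?thesis by blast
  qed
  ultimately obtain w0
    where "w0 \<in> f -` {1}" and "\<And>s. s \<in> f -` {1} \<Longrightarrow> norm w0 \<le> norm s"
    using min_norm_point_exists by metis
  then have w0: "f w0 = 1" and w0_min: "\<And>s. f s = 1 \<Longrightarrow> norm w0 \<le> norm s"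
    by auto
  \<comment> \<open>A minimal point of the hyperplane \<open>f = 1\<close> is orthogonal to the kernel of \<open>f\<close>.\<close>
  have kernel: "w0 \<bullet> k = 0" if "f k = 0" for k
  proof (rule inner_eq_0_if_norm_le_norm_add_scaleR)
    show "norm w0 \<le> norm (w0 + t *\<^sub>R k)" for t
      using that w0 by (intro w0_min) (simp add: f.add f.scale)
  qed
  have "w0 \<bullet> w0 \<noteq> 0"
    using w0 by auto
  show ?thesis
  proof (rule that)
    fix u
    have "w0 \<bullet> (u - f u *\<^sub>R w0) = 0"
      by (rule kernel) (simp add: f.diff f.scale w0)
    then show "f u = u \<bullet> (w0 /\<^sub>R (w0 \<bullet> w0))"
      using \<open>w0 \<bullet> w0 \<noteq> 0\<close> by (simp add: inner_diff_right inner_commute)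
  qed
qed

section \<open>Covariance of square-integrable random variables\<close>

definition square_integrable :: "'a measure \<Rightarrow> ('a \<Rightarrow> real) \<Rightarrow> bool" where
  "square_integrable M f \<longleftrightarrow> f \<in> borel_measurable M \<and> integrable M (\<lambda>x. (f x)\<^sup>2)"

lemma square_integrable_imp_integrable_mult:
  assumes "square_integrable M f" and "square_integrable M g"
  shows "integrable M (\<lambda>x. f x * g x)"
proof (rule Bochner_Integration.integrable_bound)
  show "integrable M (\<lambda>x. (f x)\<^sup>2 + (g x)\<^sup>2)"
    using assms by (auto simp: square_integrable_def)
  show "(\<lambda>x. f x * g x) \<in> borel_measurable M"
    using assms by (auto simp: square_integrable_def)
  have "\<bar>f x * g x\<bar> \<le> (f x)\<^sup>2 + (g x)\<^sup>2" for x
  proof -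
    have "\<bar>f x * g x\<bar> \<le> 2 * \<bar>f x * g x\<bar>"
      by simp
    also have "\<dots> \<le> (f x)\<^sup>2 + (g x)\<^sup>2"
      using sum_squares_bound[of "\<bar>f x\<bar>" "\<bar>g x\<bar>"] by (simp add: abs_mult mult.assoc)
    finally show ?thesis .
  qed
  then show "AE x in M. norm (f x * g x) \<le> norm ((f x)\<^sup>2 + (g x)\<^sup>2)"
    by simp
qed

lemma square_integrable_lincomb:
  assumes "square_integrable M f" and "square_integrable M g"
  shows "square_integrable M (\<lambda>x. a * f x + b * g x)"
proof -
  have [measurable]: "f \<in> borel_measurable M" "g \<in> borel_measurable M"
    using assms by (auto simp: square_integrable_def)
  have "(\<lambda>x. (a * f x + b * g x)\<^sup>2)
      = (\<lambda>x. a\<^sup>2 * (f x)\<^sup>2 + b\<^sup>2 * (g x)\<^sup>2 + 2 * a * b * (f x * g x))"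
    by (simp add: power2_eq_square algebra_simps)
  moreover have "integrable M \<dots>"
    using assms square_integrable_imp_integrable_mult[OF assms]
    by (auto simp: square_integrable_def)
  ultimately show ?thesis
    by (simp add: square_integrable_def)
qed

lemma (in finite_measure) integrable_if_square_integrable:
  "square_integrable M f \<Longrightarrow> integrable M f"
  unfolding square_integrable_def by (rule square_integrable_imp_integrable) auto

lemma rv_var_eq_rv_cov: "rv_var M U = rv_cov M U U"
  unfolding rv_var_def rv_cov_def by (simp add: power2_eq_square)

lemma rv_cov_commute: "rv_cov M U V = rv_cov M V U"
  unfolding rv_cov_def by (simp add: mult.commute)

lemma rv_var_nonneg: "0 \<le> rv_var M U"
  unfolding rv_var_def by (rule integral_nonneg_AE) auto

lemma rv_cov_cong_AE:
  assumes "U \<in> borel_measurable M" "V \<in> borel_measurable M" "V' \<in> borel_measurable M"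
    and "AE x in M. V x = V' x"
  shows "rv_cov M U V = rv_cov M U V'"
proof -
  have "(\<integral>x. V x \<partial>M) = (\<integral>x. V' x \<partial>M)"
    using assms by (intro integral_cong_AE) auto
  then show ?thesis
    unfolding rv_cov_def using assms by (intro integral_cong_AE) auto
qed

lemma rv_var_mult_rv_corr_square:
  assumes "0 < rv_var M V"
  shows "rv_var M V * (rv_corr M U V)\<^sup>2 = (rv_cov M U V)\<^sup>2 / rv_var M U"
  using assms rv_var_nonneg[of M U]
  by (simp add: rv_corr_def power_divide real_sqrt_mult power_mult_distrib)

context prob_space
begin

lemma rv_cov_eq:
  assumes "square_integrable M U" and "square_integrable M V"
  shows "rv_cov M U V = (\<integral>x. U x * V x \<partial>M) - (\<integral>x. U x \<partial>M) * (\<integral>x. V x \<partial>M)"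
proof -
  have "integrable M U" "integrable M V" "integrable M (\<lambda>x. U x * V x)"
    using assms by (auto intro: integrable_if_square_integrable square_integrable_imp_integrable_mult)
  then show ?thesis
    unfolding rv_cov_def by (simp add: algebra_simps prob_space)
qed

lemma rv_cov_lincomb_left:
  assumes "square_integrable M U" and "square_integrable M V" and "square_integrable M W"
  shows "rv_cov M (\<lambda>x. a * U x + b * V x) W = a * rv_cov M U W + b * rv_cov M V W"
proof -
  have "integrable M U" "integrable M V"
    "integrable M (\<lambda>x. U x * W x)" "integrable M (\<lambda>x. V x * W x)"
    using assms by (auto intro: integrable_if_square_integrable square_integrable_imp_integrable_mult)
  then show ?thesis
    using assms square_integrable_lincomb[OF assms(1,2)]
    by (simp add: rv_cov_eq algebra_simps)
qed

lemma rv_cov_square_le: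
  assumes "square_integrable M U" and "square_integrable M V"
  shows "(rv_cov M U V)\<^sup>2 \<le> rv_var M U * rv_var M V"
proof -
  have "0 \<le> rv_var M V * t\<^sup>2 + (- 2 * rv_cov M U V) * t + rv_var M U" for t
  proof -
    define W where "W x = 1 * U x + (- t) * V x" for x
    have W: "square_integrable M W"
      unfolding W_def using assms by (rule square_integrable_lincomb)
    have "0 \<le> rv_cov M W W"
      using rv_var_nonneg by (simp add: rv_var_eq_rv_cov)
    also have "\<dots> = rv_cov M U W - t * rv_cov M V W"
      using rv_cov_lincomb_left[OF assms W, of 1 "- t"] by (simp add: W_def[abs_def])
    also have "rv_cov M U W = rv_var M U - t * rv_cov M U V"
      using rv_cov_lincomb_left[OF assms assms(1), of 1 "- t"]
        rv_cov_commute[of M U W] rv_cov_commute[of M V U]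
      by (simp add: W_def[abs_def] rv_var_eq_rv_cov)
    also have "rv_cov M V W = rv_cov M U V - t * rv_var M V"
      using rv_cov_lincomb_left[OF assms assms(2), of 1 "- t"] rv_cov_commute[of M V W]
      by (simp add: W_def[abs_def] rv_var_eq_rv_cov)
    finally show ?thesis
      by (simp add: power2_eq_square algebra_simps)
  qed
  from quadratic_nonneg_imp_discriminant_nonpos[OF rv_var_nonneg this]
  show ?thesis
    by (simp add: power2_eq_square mult.commute)
qed

lemma rv_var_le_integral_square:
  assumes "square_integrable M U"
  shows "rv_var M U \<le> (\<integral>x. (U x)\<^sup>2 \<partial>M)"
  using rv_cov_eq[OF assms assms] by (simp add: rv_var_eq_rv_cov power2_eq_square)

end

section \<open>Conditioning preserving the variance\<close>

context prob_space
begin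

lemma sigma_finite_subalgebra_if_subalgebra:
  assumes "subalgebra M F"
  shows "sigma_finite_subalgebra M F"
  using finite_measure_axioms assms
  by (intro finite_measure_subalgebra_is_sigma_finite finite_measure_subalgebra.intro
      finite_measure_subalgebra_axioms.intro)

lemma square_integrable_real_cond_exp:
  assumes "subalgebra M F" and "square_integrable M U"
  shows "square_integrable M (real_cond_exp M F U)"
proof -
  interpret sigma_finite_subalgebra M F
    using assms(1) by (rule sigma_finite_subalgebra_if_subalgebra)
  have "integrable M (\<lambda>x. (real_cond_exp M F U x)\<^sup>2)"
    using assms(2) convex_power2
    by (intro integrable_convex_cond_exp[where I=UNIV])
      (auto simp: square_integrable_def intro: integrable_if_square_integrable[OF assms(2)])
  then show ?thesis
    by (simp add: square_integrable_def)
qed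

lemma integral_real_cond_exp_mult:
  assumes "subalgebra M F" and "square_integrable M U" and "square_integrable M V"
  shows "(\<integral>x. real_cond_exp M F U x * real_cond_exp M F V x \<partial>M)
    = (\<integral>x. real_cond_exp M F U x * V x \<partial>M)"
proof -
  interpret sigma_finite_subalgebra M F
    using assms(1) by (rule sigma_finite_subalgebra_if_subalgebra)
  show ?thesis
    using assms square_integrable_real_cond_exp[OF assms(1,2)]
    by (intro real_cond_exp_intg(2) square_integrable_imp_integrable_mult)
      (auto simp: square_integrable_def)
qed

lemma integral_real_cond_exp:
  assumes "subalgebra M F" and "square_integrable M U"
  shows "(\<integral>x. real_cond_exp M F U x \<partial>M) = (\<integral>x. U x \<partial>M)"
proof -
  interpret sigma_finite_subalgebra M F
    using assms(1) by (rule sigma_finite_subalgebra_if_subalgebra)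
  show ?thesis
    using assms(2) by (intro real_cond_exp_int(2) integrable_if_square_integrable)
qed

lemma real_cond_exp_AE_eq_if_rv_var_eq:
  assumes "subalgebra M F" and Y: "square_integrable M Y"
    and var_eq: "rv_var M (real_cond_exp M F Y) = rv_var M Y"
  shows "AE x in M. real_cond_exp M F Y x = Y x"
proof -
  define Y' where "Y' = real_cond_exp M F Y"
  have Y': "square_integrable M Y'"
    unfolding Y'_def using assms(1) Y by (rule square_integrable_real_cond_exp)
  have sq_eq: "(\<integral>x. Y' x * Y' x \<partial>M) = (\<integral>x. Y x * Y x \<partial>M)"
    using var_eq rv_cov_eq[OF Y Y] rv_cov_eq[OF Y' Y'] integral_real_cond_exp[OF assms(1) Y]
    by (simp add: Y'_def rv_var_eq_rv_cov)
  \<comment> \<open>Law of total variance: \<open>E (Y - Y')\<^sup>2 = Var Y - Var Y'\<close>.\<close>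
  have "(\<lambda>x. (Y x - Y' x)\<^sup>2) = (\<lambda>x. Y x * Y x - 2 * (Y' x * Y x) + Y' x * Y' x)"
    by (simp add: fun_eq_iff power2_eq_square algebra_simps)
  then have "(\<integral>x. (Y x - Y' x)\<^sup>2 \<partial>M)
      = (\<integral>x. Y x * Y x \<partial>M) - 2 * (\<integral>x. Y' x * Y x \<partial>M) + (\<integral>x. Y' x * Y' x \<partial>M)"
    using Y Y' by (simp add: square_integrable_imp_integrable_mult)
  also have "\<dots> = 0"
    using integral_real_cond_exp_mult[OF assms(1) Y Y] sq_eq by (simp add: Y'_def)
  finally have "AE x in M. (Y x - Y' x)\<^sup>2 = 0"
    using Y Y' square_integrable_lincomb[OF Y Y', of 1 "- 1"]
    by (subst integral_nonneg_eq_0_iff_AE[symmetric]) (auto simp: square_integrable_def)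
  then show ?thesis
    by (auto simp: Y'_def)
qed

lemma rv_cov_real_cond_exp:
  assumes "subalgebra M F" and A: "square_integrable M A" and Y: "square_integrable M Y"
  shows "rv_cov M (real_cond_exp M F A) (real_cond_exp M F Y) = rv_cov M A (real_cond_exp M F Y)"
proof -
  have A': "square_integrable M (real_cond_exp M F A)"
    and Y': "square_integrable M (real_cond_exp M F Y)"
    using assms by (auto intro: square_integrable_real_cond_exp)
  show ?thesis
    using integral_real_cond_exp_mult[OF assms(1) Y A] integral_real_cond_exp[OF assms(1) A]
    by (simp add: rv_cov_eq[OF A' Y'] rv_cov_eq[OF A Y'] mult.commute)
qed

lemma rv_cov_square_le_rv_var_real_cond_exp:
  assumes "subalgebra M F" and A: "square_integrable M A" and Y: "square_integrable M Y"
    and var_eq: "rv_var M (real_cond_exp M F Y) = rv_var M Y"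
  shows "(rv_cov M A Y)\<^sup>2 \<le> rv_var M (real_cond_exp M F A) * rv_var M Y"
proof -
  have "AE x in M. Y x = real_cond_exp M F Y x"
    using real_cond_exp_AE_eq_if_rv_var_eq[OF assms(1) Y var_eq] by (rule eventually_mono) simp
  then have "rv_cov M A Y = rv_cov M A (real_cond_exp M F Y)"
    using A Y by (intro rv_cov_cong_AE) (auto simp: square_integrable_def)
  also have "\<dots> = rv_cov M (real_cond_exp M F A) (real_cond_exp M F Y)"
    using rv_cov_real_cond_exp[OF assms(1-3)] ..
  finally have "(rv_cov M A Y)\<^sup>2 = (rv_cov M (real_cond_exp M F A) (real_cond_exp M F Y))\<^sup>2"
    by simp
  also have "\<dots> \<le> rv_var M (real_cond_exp M F A) * rv_var M (real_cond_exp M F Y)"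
    using assms by (intro rv_cov_square_le square_integrable_real_cond_exp)
  finally show ?thesis
    using var_eq by simp
qed

end

section \<open>The covariance operator\<close>

lemma square_integrable_inner:
  fixes Phi :: "'a \<Rightarrow> 'h::real_inner"
  assumes "Phi \<in> borel_measurable M" and "integrable M (\<lambda>x. (norm (Phi x))\<^sup>2)"
  shows "square_integrable M (\<lambda>x. Phi x \<bullet> u)"
  unfolding square_integrable_def
proof
  have "(\<lambda>h. h \<bullet> u) \<in> borel_measurable borel"
    by (intro borel_measurable_continuous_onI continuous_intros)
  then show meas: "(\<lambda>x. Phi x \<bullet> u) \<in> borel_measurable M"
    using assms(1) by (simp add: measurable_compose[of Phi])
  show "integrable M (\<lambda>x. (Phi x \<bullet> u)\<^sup>2)"
  proof (rule Bochner_Integration.integrable_bound)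
    show "integrable M (\<lambda>x. (norm u)\<^sup>2 * (norm (Phi x))\<^sup>2)"
      using assms(2) by simp
    show "AE x in M. norm ((Phi x \<bullet> u)\<^sup>2) \<le> norm ((norm u)\<^sup>2 * (norm (Phi x))\<^sup>2)"
      using Cauchy_Schwarz_ineq[of "Phi x" u for x]
      by (simp add: power2_norm_eq_inner mult.commute)
  qed (use meas in measurable)
qed

context prob_space
begin

lemma rv_cov_inner_bound:
  fixes Phi :: "'a \<Rightarrow> 'h::real_inner"
  assumes "Phi \<in> borel_measurable M" and "integrable M (\<lambda>x. (norm (Phi x))\<^sup>2)"
  shows "\<bar>rv_cov M (\<lambda>x. Phi x \<bullet> u) (\<lambda>x. Phi x \<bullet> v)\<bar>
    \<le> norm u * norm v * (\<integral>x. (norm (Phi x))\<^sup>2 \<partial>M)"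
proof -
  define K where "K = (\<integral>x. (norm (Phi x))\<^sup>2 \<partial>M)"
  have "0 \<le> K"
    unfolding K_def by (rule integral_nonneg_AE) simp
  have var_le: "rv_var M (\<lambda>x. Phi x \<bullet> w) \<le> (norm w)\<^sup>2 * K" for w
  proof -
    have "rv_var M (\<lambda>x. Phi x \<bullet> w) \<le> (\<integral>x. (Phi x \<bullet> w)\<^sup>2 \<partial>M)"
      using assms by (intro rv_var_le_integral_square square_integrable_inner)
    also have "\<dots> \<le> (\<integral>x. (norm w)\<^sup>2 * (norm (Phi x))\<^sup>2 \<partial>M)"
      using assms square_integrable_inner[OF assms, of w] Cauchy_Schwarz_ineq[of "Phi x" w for x]
      by (intro integral_mono) (auto simp: square_integrable_def power2_norm_eq_inner mult.commute)
    finally show ?thesis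
      by (simp add: K_def)
  qed
  have "(rv_cov M (\<lambda>x. Phi x \<bullet> u) (\<lambda>x. Phi x \<bullet> v))\<^sup>2
      \<le> rv_var M (\<lambda>x. Phi x \<bullet> u) * rv_var M (\<lambda>x. Phi x \<bullet> v)"
    using assms by (intro rv_cov_square_le square_integrable_inner)
  also have "\<dots> \<le> ((norm u)\<^sup>2 * K) * ((norm v)\<^sup>2 * K)"
    using var_le \<open>0 \<le> K\<close> by (intro mult_mono) (auto intro: rv_var_nonneg)
  also have "\<dots> = (norm u * norm v * K)\<^sup>2"
    by (simp add: power2_eq_square)
  finally have "\<bar>rv_cov M (\<lambda>x. Phi x \<bullet> u) (\<lambda>x. Phi x \<bullet> v)\<bar> \<le> \<bar>norm u * norm v * K\<bar>"
    by (simp only: abs_le_square_iff)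
  then show ?thesis
    using \<open>0 \<le> K\<close> by (simp add: K_def)
qed

lemma cov_op_inner:
  fixes Phi :: "'a \<Rightarrow> 'h::{real_inner, complete_space}"
  assumes "Phi \<in> borel_measurable M" and "integrable M (\<lambda>x. (norm (Phi x))\<^sup>2)"
  shows "u \<bullet> cov_op M Phi v = rv_cov M (\<lambda>x. Phi x \<bullet> u) (\<lambda>x. Phi x \<bullet> v)"
proof -
  define B where "B u v = rv_cov M (\<lambda>x. Phi x \<bullet> u) (\<lambda>x. Phi x \<bullet> v)" for u v
  have sq: "square_integrable M (\<lambda>x. Phi x \<bullet> w)" for w
    using assms by (rule square_integrable_inner)
  have lin: "bounded_linear (\<lambda>u. B u v)" for v
  proof (rule bounded_linear_intro)
    show "B (u + u') v = B u v + B u' v" for u u'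
      using rv_cov_lincomb_left[OF sq sq sq, of 1 u 1 u' v] by (simp add: B_def inner_add_right)
    show "B (r *\<^sub>R u) v = r *\<^sub>R B u v" for r u
      using rv_cov_lincomb_left[OF sq sq sq, of r u 0 u v] by (simp add: B_def)
    show "norm (B u v) \<le> norm u * (norm v * (\<integral>x. (norm (Phi x))\<^sup>2 \<partial>M))" for u
      using rv_cov_inner_bound[OF assms, of u v] by (simp add: B_def mult.assoc)
  qed
  have "\<exists>w. \<forall>u. B u v = u \<bullet> w" for v
    using riesz_representation[OF lin] by blast
  then obtain T where T: "\<And>u v. B u v = u \<bullet> T v"
    by metis
  have "cov_op M Phi = T"
    unfolding cov_op_def
  proof (rule the_equality)
    show "\<forall>u v. u \<bullet> T v = rv_cov M (\<lambda>x. Phi x \<bullet> u) (\<lambda>x. Phi x \<bullet> v)"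
      using T by (simp add: B_def)
    show "T' = T" if "\<forall>u v. u \<bullet> T' v = rv_cov M (\<lambda>x. Phi x \<bullet> u) (\<lambda>x. Phi x \<bullet> v)" for T'
    proof
      fix v
      have "\<forall>u. u \<bullet> T' v = u \<bullet> T v"
        using that T by (simp add: B_def)
      then show "T' v = T v"
        by (simp add: vector_eq_ldot)
    qed
  qed
  then show ?thesis
    using T by (simp add: B_def)
qed

end

theorem theorem4:
  fixes M :: "'o measure" and MX :: "'x measure" and MS :: "'s measure" and MZ :: "'z measure"
    and X :: "'o \<Rightarrow> 'x" and S :: "'o \<Rightarrow> 's" and g :: "'x \<times> 's \<Rightarrow> 'z"
    and \<phi> :: "'x \<Rightarrow> 'h::{real_inner, complete_space}" and a y :: 'h
  assumes "prob_space M"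
    and "X \<in> M \<rightarrow>\<^sub>M MX" and "S \<in> M \<rightarrow>\<^sub>M MS"
    and "\<forall>B\<in>sets MX. \<forall>C\<in>sets MS.
         measure M (X -` B \<inter> S -` C \<inter> space M)
           = measure M (X -` B \<inter> space M) * measure M (S -` C \<inter> space M)"
    and "g \<in> MX \<Otimes>\<^sub>M MS \<rightarrow>\<^sub>M MZ"
    and "\<phi> \<in> MX \<rightarrow>\<^sub>M borel"
    and "closure (span (range \<phi>)) = UNIV"
    and "integrable M (\<lambda>\<omega>. (norm (\<phi> (X \<omega>)))\<^sup>2)"
    and "y \<noteq> 0" and "a \<noteq> 0"
    and "rv_var M (\<lambda>\<omega>. \<phi> (X \<omega>) \<bullet> y) > 0"
    and "rv_var M (\<lambda>\<omega>. \<phi> (X \<omega>) \<bullet> a) > 0"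
    and "rv_var M (cond_exp_given M (\<lambda>\<omega>. g (X \<omega>, S \<omega>)) MZ (\<lambda>\<omega>. \<phi> (X \<omega>) \<bullet> y))
         = rv_var M (\<lambda>\<omega>. \<phi> (X \<omega>) \<bullet> y)"
  shows "rv_var M (cond_exp_given M (\<lambda>\<omega>. g (X \<omega>, S \<omega>)) MZ (\<lambda>\<omega>. \<phi> (X \<omega>) \<bullet> a))
           \<ge> (a \<bullet> cov_op M (\<lambda>\<omega>. \<phi> (X \<omega>)) y)\<^sup>2 / (y \<bullet> cov_op M (\<lambda>\<omega>. \<phi> (X \<omega>)) y)
       \<and> (a \<bullet> cov_op M (\<lambda>\<omega>. \<phi> (X \<omega>)) y)\<^sup>2 / (y \<bullet> cov_op M (\<lambda>\<omega>. \<phi> (X \<omega>)) y)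
           = rv_var M (\<lambda>\<omega>. \<phi> (X \<omega>) \<bullet> a)
             * (rv_corr M (\<lambda>\<omega>. \<phi> (X \<omega>) \<bullet> y) (\<lambda>\<omega>. \<phi> (X \<omega>) \<bullet> a))\<^sup>2"
proof -
  interpret prob_space M by (rule assms(1))
  define Yv where "Yv = (\<lambda>\<omega>. \<phi> (X \<omega>) \<bullet> y)"
  define Av where "Av = (\<lambda>\<omega>. \<phi> (X \<omega>) \<bullet> a)"
  define F where "F = vimage_algebra (space M) (\<lambda>\<omega>. g (X \<omega>, S \<omega>)) MZ"
  have "(\<lambda>\<omega>. g (X \<omega>, S \<omega>)) \<in> M \<rightarrow>\<^sub>M MZ"
    using assms(2,3,5) by measurable
  then have F: "subalgebra M F"
    unfolding F_def subalgebra_def by (simp add: sets_image_in_sets)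
  have Phi: "(\<lambda>\<omega>. \<phi> (X \<omega>)) \<in> borel_measurable M"
    using assms(2,6) by (rule measurable_compose)
  have Y: "square_integrable M Yv" and A: "square_integrable M Av"
    unfolding Yv_def Av_def using Phi assms(8) by (auto intro: square_integrable_inner)
  have cov_op: "a \<bullet> cov_op M (\<lambda>\<omega>. \<phi> (X \<omega>)) y = rv_cov M Av Yv"
    "y \<bullet> cov_op M (\<lambda>\<omega>. \<phi> (X \<omega>)) y = rv_var M Yv"
    unfolding Yv_def Av_def rv_var_eq_rv_cov using Phi assms(8) by (auto intro: cov_op_inner)
  have "(rv_cov M Av Yv)\<^sup>2 \<le> rv_var M (real_cond_exp M F Av) * rv_var M Yv"
    using assms(13) by (intro rv_cov_square_le_rv_var_real_cond_exp[OF F A Y])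
      (simp add: cond_exp_given_def F_def Yv_def)
  moreover have "rv_var M Av * (rv_corr M Yv Av)\<^sup>2 = (rv_cov M Av Yv)\<^sup>2 / rv_var M Yv"
    using rv_var_mult_rv_corr_square[of M Av Yv] rv_cov_commute[of M Yv Av] assms(12)
    by (simp add: Av_def)
  ultimately show ?thesis
    using assms(11) unfolding cov_op
    by (simp add: cond_exp_given_def F_def Yv_def Av_def pos_divide_le_eq)
qed

end
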